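(* There are constants $C,C'>0$ such that for every $\delta>0$, every $R>1$, every $(\delta^2,R^2)$-lattice $(x_j)_{j\in J}$ in $F$ and every $(\delta,R)$-lattice $(\zeta_{j'})_{j'\in J'}$ in $E$, the family $(\zeta_{j'},x_j)_{(j,j')\in J\times J'}$ is a $(C\delta,C'R)$-lattice on $\mathcal N$.
   Context: Let $E$ be a complex Hilbert space, $F$ a real Hilbert space (both with their Euclidean distances), and $\Phi\colon E\times E\to F_{\mathbb C}$ a hermitian map (complex-linear in the first variable, conjugate-linear in the second); $\Phi(\zeta)=\Phi(\zeta,\zeta)$. $\mathcal N=E\times F$ with group law $(\zeta,x)(\zeta',x')=(\zeta+\zeta',x+x'+2\operatorname{Im}\Phi(\zeta,\zeta'))$, endowed with a fixed left-invariant distance $d$ which is homogeneous of degree $1$ with respect to the dilations $t\cdot(\zeta,x)=(t\zeta,t^2x)$, $t>0$. In a metric space, a family $(a_k)$ is a $(\delta,R)$-lattice if the balls $B(a_k,\delta)$ are pairwise disjoint and the balls $B(a_k,R\delta)$ cover the space. *)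

theory Defs
  imports "HOL-Analysis.Analysis"
begin

text \<open>E = complex^'n (finite-dimensional complex Hilbert space, Euclidean norm),
  F = real^'m, F_C = complex^'m.\<close>

definition hermitian_map ::
  "(complex^'n \<Rightarrow> complex^'n \<Rightarrow> complex^'m) \<Rightarrow> bool" where
  "hermitian_map \<Phi> \<longleftrightarrow>
     (\<forall>z1 z2 w. \<Phi> (z1 + z2) w = \<Phi> z1 w + \<Phi> z2 w) \<and>
     (\<forall>c z w. \<Phi> (c *s z) w = c *s \<Phi> z w) \<and>
     (\<forall>z w1 w2. \<Phi> z (w1 + w2) = \<Phi> z w1 + \<Phi> z w2) \<and>
     (\<forall>c z w. \<Phi> z (c *s w) = cnj c *s \<Phi> z w) \<and>
     (\<forall>z w. \<Phi> w z = (\<chi> i. cnj (\<Phi> z w $ i)))"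

definition ImPhi ::
  "(complex^'n \<Rightarrow> complex^'n \<Rightarrow> complex^'m) \<Rightarrow> complex^'n \<Rightarrow> complex^'n \<Rightarrow> real^'m" where
  "ImPhi \<Phi> z w = (\<chi> i. Im (\<Phi> z w $ i))"

definition Nmult ::
  "(complex^'n \<Rightarrow> complex^'n \<Rightarrow> complex^'m) \<Rightarrow>
   ((complex^'n) \<times> (real^'m)) \<Rightarrow> ((complex^'n) \<times> (real^'m)) \<Rightarrow> ((complex^'n) \<times> (real^'m))" where
  "Nmult \<Phi> p q = (fst p + fst q, snd p + snd q + 2 *\<^sub>R ImPhi \<Phi> (fst p) (fst q))"

definition Ndil :: "real \<Rightarrow> ((complex^'n) \<times> (real^'m)) \<Rightarrow> ((complex^'n) \<times> (real^'m))" where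
  "Ndil t p = (t *\<^sub>R fst p, (t^2) *\<^sub>R snd p)"

definition is_distance :: "('p \<Rightarrow> 'p \<Rightarrow> real) \<Rightarrow> bool" where
  "is_distance d \<longleftrightarrow> (\<forall>x y. d x y = 0 \<longleftrightarrow> x = y) \<and> (\<forall>x y. d x y = d y x) \<and>
     (\<forall>x y z. d x z \<le> d x y + d y z)"

definition left_invariant_homogeneous_distance ::
  "(complex^'n \<Rightarrow> complex^'n \<Rightarrow> complex^'m) \<Rightarrow>
   (((complex^'n) \<times> (real^'m)) \<Rightarrow> ((complex^'n) \<times> (real^'m)) \<Rightarrow> real) \<Rightarrow> bool" where
  "left_invariant_homogeneous_distance \<Phi> d \<longleftrightarrow> is_distance d \<and>
     (\<forall>g p q. d (Nmult \<Phi> g p) (Nmult \<Phi> g q) = d p q) \<and>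
     (\<forall>t p q. t > 0 \<longrightarrow> d (Ndil t p) (Ndil t q) = t * d p q)"

definition dball :: "('p \<Rightarrow> 'p \<Rightarrow> real) \<Rightarrow> 'p \<Rightarrow> real \<Rightarrow> 'p set" where
  "dball d a r = {y. d a y < r}"

definition is_lattice ::
  "('p \<Rightarrow> 'p \<Rightarrow> real) \<Rightarrow> 'j set \<Rightarrow> ('j \<Rightarrow> 'p) \<Rightarrow> real \<Rightarrow> real \<Rightarrow> bool" where
  "is_lattice d J a \<delta> R \<longleftrightarrow>
     (\<forall>k\<in>J. \<forall>k'\<in>J. k \<noteq> k' \<longrightarrow> dball d (a k) \<delta> \<inter> dball d (a k') \<delta> = {}) \<and>
     (\<Union>k\<in>J. dball d (a k) (R * \<delta>)) = UNIV"

end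

(*
  Write N p = d(0, p) and |(zeta, x)| = |zeta| + |x|^(1/2) for the homogeneous gauge.  By left
  invariance d(p, q) = N(p^-1 q), and the whole argument rests on N being comparable to the gauge.
  For the upper bound, N is subadditive on products; on the centre F the dilations give
  N(0, c y) = sqrt |c| N(0, y), so N(0, y) <= const * |y|^(1/2), while along E the group law only
  adds the central commutator term 2 Im Phi(u, v) of size O(|u| |v|), which keeps N bounded on the
  unit ball of E.  The upper bound makes N continuous, and the lower bound is the minimum of N on the
  compact unit gauge sphere, transported everywhere by the dilations.  For the lattices: two
  distinct points (zeta_j', x_j) are at gauge distance at least delta (if j' = j'' the commutator
  term Im Phi(zeta, zeta) vanishes), and every (z, y) is within gauge distance 2 R delta of some
  (zeta_j', x_j), choosing first zeta_j' near z and then x_j near y corrected by the commutator.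
*)

theory Submission
  imports Defs
begin

lemma is_distance_dist: "is_distance dist"
  unfolding is_distance_def by (auto simp: dist_commute dist_triangle)

lemma is_lattice_separated:
  assumes "is_lattice d J a \<delta> R" "is_distance d" "0 < \<delta>" "k \<in> J" "k' \<in> J" "k \<noteq> k'"
  shows "\<delta> \<le> d (a k) (a k')"
proof (rule ccontr)
  assume "\<not> \<delta> \<le> d (a k) (a k')"
  moreover have "d (a k') (a k') = 0"
    using assms(2) unfolding is_distance_def by blast
  ultimately have "a k' \<in> dball d (a k) \<delta> \<inter> dball d (a k') \<delta>"
    using assms(3) by (auto simp: dball_def)
  with assms(1,4-6) show False
    unfolding is_lattice_def by blast
qed

lemma is_lattice_covers:
  assumes "is_lattice d J a \<delta> R"
  obtains k where "k \<in> J" "d (a k) p < R * \<delta>"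
  using assms unfolding is_lattice_def dball_def by blast

lemma is_latticeI:
  assumes "is_distance d"
    and "\<And>k k'. k \<in> J \<Longrightarrow> k' \<in> J \<Longrightarrow> k \<noteq> k' \<Longrightarrow> 2 * \<delta> \<le> d (a k) (a k')"
    and "\<And>p. \<exists>k\<in>J. d (a k) p < R * \<delta>"
  shows "is_lattice d J a \<delta> R"
proof -
  have "dball d (a k) \<delta> \<inter> dball d (a k') \<delta> = {}"
    if "k \<in> J" "k' \<in> J" "k \<noteq> k'" for k k'
  proof -
    have "d (a k) (a k') < 2 * \<delta>" if "d (a k) p < \<delta>" "d (a k') p < \<delta>" for p
    proof -
      have "d (a k) (a k') \<le> d (a k) p + d p (a k')" "d p (a k') = d (a k') p"
        using assms(1) unfolding is_distance_def by blast+
      with that show ?thesis by linarith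
    qed
    with assms(2)[OF \<open>k \<in> J\<close> \<open>k' \<in> J\<close> \<open>k \<noteq> k'\<close>] show ?thesis
      by (force simp: dball_def)
  qed
  with assms(3) show ?thesis
    unfolding is_lattice_def dball_def by blast
qed

lemma ImPhi_bilinear:
  assumes "hermitian_map \<Phi>"
  shows "bilinear (ImPhi \<Phi>)"
proof -
  have real_smult: "complex_of_real r *s z = r *\<^sub>R z" for r and z :: "complex^'n"
    by (simp add: vec_eq_iff scaleR_vec_def vector_scalar_mult_def scaleR_conv_of_real
        del: vector_scaleR_component)
  have "\<Phi> (r *\<^sub>R z) w = complex_of_real r *s \<Phi> z w"
    and "\<Phi> z (r *\<^sub>R w) = complex_of_real r *s \<Phi> z w" for r z w
    using assms unfolding hermitian_map_def by (metis complex_cnj_complex_of_real real_smult)+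
  moreover have "\<Phi> (z1 + z2) w = \<Phi> z1 w + \<Phi> z2 w"
    and "\<Phi> z (w1 + w2) = \<Phi> z w1 + \<Phi> z w2" for z1 z2 z w1 w2 w
    using assms unfolding hermitian_map_def by blast+
  ultimately show ?thesis
    unfolding bilinear_def by (auto intro!: linearI simp: ImPhi_def vec_eq_iff)
qed

lemma ImPhi_self:
  assumes "hermitian_map \<Phi>"
  shows "ImPhi \<Phi> z z = 0"
proof -
  have "\<Phi> z z $ i = cnj (\<Phi> z z $ i)" for i
    using assms unfolding hermitian_map_def by (metis vec_lambda_beta)
  then show ?thesis
    by (simp add: ImPhi_def vec_eq_iff) (metis Reals_cnj_iff complex_is_Real_iff)
qed

definition Ngauge :: "(complex^'n) \<times> (real^'m) \<Rightarrow> real" where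
  "Ngauge p = norm (fst p) + sqrt (norm (snd p))"

lemma Ngauge_nonneg: "0 \<le> Ngauge p"
  by (simp add: Ngauge_def)

lemma Ngauge_eq_0_iff: "Ngauge p = 0 \<longleftrightarrow> p = 0"
  by (auto simp: Ngauge_def add_nonneg_eq_0_iff prod_eq_iff)

lemma Ngauge_zero [simp]: "Ngauge 0 = 0"
  by (simp add: Ngauge_def)

lemma Ngauge_Ndil: "0 \<le> t \<Longrightarrow> Ngauge (Ndil t p) = t * Ngauge p"
  by (simp add: Ngauge_def Ndil_def real_sqrt_mult distrib_left)

lemma continuous_Ngauge: "continuous_on S Ngauge"
  unfolding Ngauge_def by (intro continuous_intros)

lemma compact_Ngauge_sphere: "compact {p. Ngauge p = 1}"
proof -
  have "norm p \<le> 2" if "Ngauge p = 1" for p :: "(complex^'n) \<times> (real^'m)"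
  proof -
    have "0 \<le> norm (fst p)" "0 \<le> sqrt (norm (snd p))"
      by simp_all
    with that have "norm (fst p) \<le> 1" "sqrt (norm (snd p)) \<le> 1"
      unfolding Ngauge_def by linarith+
    then show ?thesis
      using norm_Pair_le[of "fst p" "snd p"] by simp
  qed
  then have "bounded {p. Ngauge p = 1}"
    by (auto simp: bounded_iff)
  moreover have "closed {p. Ngauge p = 1}"
    using continuous_Ngauge by (intro closed_Collect_eq) auto
  ultimately show ?thesis
    by (simp add: compact_eq_bounded_closed)
qed

lemma Ngauge_sphere_nonempty: "{p :: (complex^'n) \<times> (real^'m). Ngauge p = 1} \<noteq> {}"
proof -
  obtain b :: "complex^'n" where "b \<in> Basis"
    using nonempty_Basis by blast
  then have "Ngauge (b, 0 :: real^'m) = 1"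
    by (simp add: Ngauge_def)
  then show ?thesis by blast
qed

lemma homogeneous_le_from_Ngauge_sphere:
  assumes f: "\<And>t p. 0 < t \<Longrightarrow> f (Ndil t p) = t * f p"
    and g: "\<And>t p. 0 < t \<Longrightarrow> g (Ndil t p) = t * g p"
    and zero: "f 0 \<le> g 0"
    and sphere: "\<And>q. Ngauge q = 1 \<Longrightarrow> f q \<le> g q"
  shows "f p \<le> g p"
proof (cases "p = 0")
  case True
  with zero show ?thesis by simp
next
  case False
  define t where "t = Ngauge p"
  define q where "q = Ndil (1 / t) p"
  have "0 < t"
    using False Ngauge_nonneg Ngauge_eq_0_iff unfolding t_def by (metis order_le_less)
  have "Ngauge q = 1"
    using \<open>0 < t\<close> by (simp add: q_def Ngauge_Ndil t_def[symmetric])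
  have p: "p = Ndil t q"
    using \<open>0 < t\<close> by (simp add: q_def Ndil_def power_divide)
  have "f p = t * f q"
    using f[OF \<open>0 < t\<close>, of q] p by simp
  also have "\<dots> \<le> t * g q"
    using sphere[OF \<open>Ngauge q = 1\<close>] \<open>0 < t\<close> by simp
  also have "\<dots> = g p"
    using g[OF \<open>0 < t\<close>, of q] p by simp
  finally show ?thesis .
qed

locale homogeneous_distance =
  fixes \<Phi> :: "complex^'n \<Rightarrow> complex^'n \<Rightarrow> complex^'m"
    and d :: "((complex^'n) \<times> (real^'m)) \<Rightarrow> ((complex^'n) \<times> (real^'m)) \<Rightarrow> real"
  assumes hermitian: "hermitian_map \<Phi>"
    and homogeneous: "left_invariant_homogeneous_distance \<Phi> d"
begin

definition Nnorm :: "(complex^'n) \<times> (real^'m) \<Rightarrow> real" where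
  "Nnorm p = d 0 p"

lemma distance: "is_distance d"
  using homogeneous unfolding left_invariant_homogeneous_distance_def by blast

lemma left_invariant: "d (Nmult \<Phi> g p) (Nmult \<Phi> g q) = d p q"
  using homogeneous unfolding left_invariant_homogeneous_distance_def by blast

lemma d_commute: "d p q = d q p"
  and d_triangle: "d p q \<le> d p r + d r q"
  and d_eq_0_iff: "d p q = 0 \<longleftrightarrow> p = q"
  using distance unfolding is_distance_def by blast+

lemma d_nonneg: "0 \<le> d p q"
  using d_triangle[of p p q] d_commute[of q p] d_eq_0_iff[of p p] by simp

lemma Nnorm_nonneg: "0 \<le> Nnorm p"
  by (simp add: Nnorm_def d_nonneg)

lemma Nnorm_eq_0_iff: "Nnorm p = 0 \<longleftrightarrow> p = 0"
  by (auto simp: Nnorm_def d_eq_0_iff)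

lemma Nnorm_zero [simp]: "Nnorm 0 = 0"
  by (simp add: Nnorm_eq_0_iff)

lemmas ImPhi_simps [simp] =
  bilinear_rzero[OF ImPhi_bilinear[OF hermitian]]
  bilinear_lneg[OF ImPhi_bilinear[OF hermitian]]
  ImPhi_self[OF hermitian]

lemma Nmult_zero_right [simp]: "Nmult \<Phi> p 0 = p"
  by (simp add: Nmult_def)

lemma Nmult_uminus_left [simp]: "Nmult \<Phi> (- p) p = 0"
  by (simp add: Nmult_def prod_eq_iff)

lemma d_eq_Nnorm: "d p q = Nnorm (fst q - fst p, snd q - snd p - 2 *\<^sub>R ImPhi \<Phi> (fst p) (fst q))"
proof -
  have "Nmult \<Phi> (- p) q = (fst q - fst p, snd q - snd p - 2 *\<^sub>R ImPhi \<Phi> (fst p) (fst q))"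
    by (simp add: Nmult_def)
  then show ?thesis
    using left_invariant[of "- p" p q] by (simp add: Nnorm_def)
qed

text \<open>Left invariance makes \<open>d p (p q) = d 0 q\<close>.\<close>

lemma Nnorm_Nmult_le: "Nnorm (Nmult \<Phi> p q) \<le> Nnorm p + Nnorm q"
proof -
  have "d p (Nmult \<Phi> p q) = d 0 q"
    using left_invariant[of p 0 q] by simp
  then show ?thesis
    using d_triangle[of 0 "Nmult \<Phi> p q" p] by (simp add: Nnorm_def)
qed

lemma Nnorm_uminus: "Nnorm (- p) = Nnorm p"
  using left_invariant[of "- p" p 0] d_commute[of p 0] by (simp add: Nnorm_def)

lemma Nnorm_Ndil: "0 < t \<Longrightarrow> Nnorm (Ndil t p) = t * Nnorm p"
  using homogeneous unfolding left_invariant_homogeneous_distance_def Nnorm_def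
  by (metis Ndil_def fst_zero snd_zero scale_zero_right zero_prod_def)

lemma Nnorm_split_le: "Nnorm (w, y) \<le> Nnorm (w, 0) + Nnorm (0, y)"
  using Nnorm_Nmult_le[of "(w, 0)" "(0, y)"] by (simp add: Nmult_def)

lemma Nnorm_center_add_le: "Nnorm (0, y + z) \<le> Nnorm (0, y) + Nnorm (0, z)"
  using Nnorm_Nmult_le[of "(0, y)" "(0, z)"] by (simp add: Nmult_def)

lemma Nnorm_center_sum_le:
  "finite S \<Longrightarrow> Nnorm (0, \<Sum>i\<in>S. f i) \<le> (\<Sum>i\<in>S. Nnorm (0, f i))"
proof (induction S rule: finite_induct)
  case empty
  then show ?case by (simp add: zero_prod_def[symmetric])
next
  case (insert i S)
  then show ?case
    using Nnorm_center_add_le[of "f i" "sum f S"] by simp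
qed

lemma Nnorm_center_scale: "Nnorm (0, c *\<^sub>R y) = sqrt \<bar>c\<bar> * Nnorm (0, y)"
proof -
  have scale: "Nnorm (0, c *\<^sub>R y) = sqrt c * Nnorm (0, y)" if "0 < c" for c y
    using Nnorm_Ndil[of "sqrt c" "(0, y)"] that by (simp add: Ndil_def)
  consider "0 < c" | "c = 0" | "c < 0" by linarith
  then show ?thesis
  proof cases
    case 3
    then have "Nnorm (0, c *\<^sub>R y) = sqrt (- c) * Nnorm (0, - y)"
      using scale[of "- c" "- y"] by simp
    also have "Nnorm (0, - y) = Nnorm (0, y)"
      using Nnorm_uminus[of "(0, y)"] by simp
    finally show ?thesis using 3 by simp
  qed (simp_all add: scale zero_prod_def[symmetric])
qed

lemma Nnorm_horizontal_scale: "Nnorm (c *\<^sub>R w, 0) = \<bar>c\<bar> * Nnorm (w, 0)"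
proof -
  have scale: "Nnorm (c *\<^sub>R w, 0) = c * Nnorm (w, 0)" if "0 < c" for c w
    using Nnorm_Ndil[of c "(w, 0)"] that by (simp add: Ndil_def)
  consider "0 < c" | "c = 0" | "c < 0" by linarith
  then show ?thesis
  proof cases
    case 3
    then have "Nnorm (c *\<^sub>R w, 0) = - c * Nnorm (- w, 0)"
      using scale[of "- c" "- w"] by simp
    also have "Nnorm (- w, 0) = Nnorm (w, 0)"
      using Nnorm_uminus[of "(w, 0)"] by simp
    finally show ?thesis using 3 by simp
  qed (simp_all add: scale zero_prod_def[symmetric])
qed

definition center_bound :: real where
  "center_bound = (\<Sum>b\<in>Basis. Nnorm (0, b))"

lemma Nnorm_center_le: "Nnorm (0, y) \<le> center_bound * sqrt (norm y)"
proof -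
  have "Nnorm (0, y) = Nnorm (0, \<Sum>b\<in>Basis. (y \<bullet> b) *\<^sub>R b)"
    by (simp add: euclidean_representation)
  also have "\<dots> \<le> (\<Sum>b\<in>Basis. Nnorm (0, (y \<bullet> b) *\<^sub>R b))"
    by (rule Nnorm_center_sum_le) simp
  also have "\<dots> \<le> (\<Sum>b\<in>Basis. sqrt (norm y) * Nnorm (0, b))"
  proof (rule sum_mono)
    fix b :: "real^'m"
    assume "b \<in> Basis"
    then have "sqrt \<bar>y \<bullet> b\<bar> \<le> sqrt (norm y)"
      using Basis_le_norm by simp
    then show "Nnorm (0, (y \<bullet> b) *\<^sub>R b) \<le> sqrt (norm y) * Nnorm (0, b)"
      by (simp add: Nnorm_center_scale Nnorm_nonneg mult_right_mono)
  qed
  also have "\<dots> = center_bound * sqrt (norm y)"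
    by (simp add: center_bound_def sum_distrib_left mult.commute)
  finally show ?thesis .
qed

lemma center_bound_nonneg: "0 \<le> center_bound"
  by (simp add: center_bound_def Nnorm_nonneg sum_nonneg)

text \<open>Horizontal subadditivity fails only by the central commutator term:
  \<open>(u + v, 0) = (u, 0) (v, 0) (0, - 2 Im \<Phi>(u, v))\<close>.\<close>

lemma Nnorm_horizontal_add_le:
  "Nnorm (u + v, 0) \<le> Nnorm (u, 0) + Nnorm (v, 0) + Nnorm (0, 2 *\<^sub>R ImPhi \<Phi> u v)"
proof -
  have "(u + v, 0) = Nmult \<Phi> (Nmult \<Phi> (u, 0) (v, 0)) (- (0, 2 *\<^sub>R ImPhi \<Phi> u v))"
    by (simp add: Nmult_def)
  then have "Nnorm (u + v, 0) \<le> Nnorm (Nmult \<Phi> (u, 0) (v, 0)) + Nnorm (0, 2 *\<^sub>R ImPhi \<Phi> u v)"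
    using Nnorm_Nmult_le Nnorm_uminus by metis
  then show ?thesis
    using Nnorm_Nmult_le[of "(u, 0)" "(v, 0)"] by linarith
qed

lemma Nnorm_horizontal_sum_le:
  fixes B :: real
  assumes "finite S" "\<And>i. i \<in> S \<Longrightarrow> norm (f i) \<le> 1"
    and B: "0 \<le> B" "\<And>u v. norm (ImPhi \<Phi> u v) \<le> B * norm u * norm v"
  shows "Nnorm (\<Sum>i\<in>S. f i, 0)
    \<le> (\<Sum>i\<in>S. Nnorm (f i, 0)) + card S * (center_bound * sqrt (2 * B * card S))"
  using assms(1,2)
proof (induction S rule: finite_induct)
  case empty
  then show ?case by (simp add: zero_prod_def[symmetric])
next
  case (insert i S)
  define n where "n = real (card (insert i S))"
  have "norm (sum f S) \<le> card S"
    using sum_norm_le[of S f "\<lambda>_. 1"] insert.prems by simp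
  then have "norm (f i) * norm (sum f S) \<le> 1 * real (card S)"
    using insert.prems by (intro mult_mono) auto
  then have "norm (f i) * norm (sum f S) \<le> n"
    using insert unfolding n_def by simp
  then have "norm (ImPhi \<Phi> (f i) (sum f S)) \<le> B * n"
    using B(2)[of "f i" "sum f S"] mult_left_mono[OF _ B(1)] by (simp add: mult.assoc) (meson order_trans)
  then have "sqrt (norm (2 *\<^sub>R ImPhi \<Phi> (f i) (sum f S))) \<le> sqrt (2 * B * n)"
    by simp
  then have commutator: "Nnorm (0, 2 *\<^sub>R ImPhi \<Phi> (f i) (sum f S)) \<le> center_bound * sqrt (2 * B * n)"
    using Nnorm_center_le mult_left_mono[OF _ center_bound_nonneg] by (meson order_trans)
  have "card S * (center_bound * sqrt (2 * B * card S)) \<le> card S * (center_bound * sqrt (2 * B * n))"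
    using insert B(1) center_bound_nonneg unfolding n_def
    by (intro mult_left_mono real_sqrt_le_mono) auto
  with insert have IH: "Nnorm (sum f S, 0)
      \<le> (\<Sum>i\<in>S. Nnorm (f i, 0)) + card S * (center_bound * sqrt (2 * B * n))"
    by fastforce
  have "Nnorm (sum f (insert i S), 0) = Nnorm (f i + sum f S, 0)"
    using insert.hyps by simp
  also have "\<dots> \<le> Nnorm (f i, 0) + Nnorm (sum f S, 0) + center_bound * sqrt (2 * B * n)"
    using Nnorm_horizontal_add_le[of "f i" "sum f S"] commutator by linarith
  also have "\<dots> \<le> (\<Sum>i\<in>insert i S. Nnorm (f i, 0)) + n * (center_bound * sqrt (2 * B * n))"
    using IH insert.hyps by (simp add: n_def algebra_simps)
  finally show ?case
    unfolding n_def .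
qed

lemma Nnorm_horizontal_bounded: "\<exists>K. \<forall>w. norm w \<le> 1 \<longrightarrow> Nnorm (w, 0) \<le> K"
proof -
  obtain B where "0 < B" and B: "\<And>u v. norm (ImPhi \<Phi> u v) \<le> B * norm u * norm v"
    using bilinear_bounded_pos[OF ImPhi_bilinear[OF hermitian]] by blast
  define n where "n = real (card (Basis :: (complex^'n) set))"
  have "Nnorm (w, 0) \<le> (\<Sum>b\<in>Basis. Nnorm (b, 0)) + n * (center_bound * sqrt (2 * B * n))"
    if "norm w \<le> 1" for w :: "complex^'n"
  proof -
    have coord: "\<bar>w \<bullet> b\<bar> \<le> 1" if "b \<in> Basis" for b
      using Basis_le_norm[OF that, of w] \<open>norm w \<le> 1\<close> by simp
    have "Nnorm (w, 0) = Nnorm (\<Sum>b\<in>Basis. (w \<bullet> b) *\<^sub>R b, 0)"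
      by (simp add: euclidean_representation)
    also have "\<dots> \<le> (\<Sum>b\<in>Basis. Nnorm ((w \<bullet> b) *\<^sub>R b, 0)) + n * (center_bound * sqrt (2 * B * n))"
      unfolding n_def using \<open>0 < B\<close> B coord
        Nnorm_horizontal_sum_le[where S = Basis and f = "\<lambda>b. (w \<bullet> b) *\<^sub>R b" and B = B]
      by simp
    also have "(\<Sum>b\<in>Basis. Nnorm ((w \<bullet> b) *\<^sub>R b, 0)) \<le> (\<Sum>b\<in>Basis. Nnorm (b, 0))"
      using coord Nnorm_nonneg
      by (intro sum_mono) (simp add: Nnorm_horizontal_scale mult_left_le_one_le)
    finally show ?thesis by simp
  qed
  then show ?thesis by blast
qed

lemma Nnorm_upper_bound: "\<exists>A>0. \<forall>p. Nnorm p \<le> A * Ngauge p"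
proof -
  obtain K where K: "\<And>w. norm w \<le> 1 \<Longrightarrow> Nnorm (w, 0) \<le> K"
    using Nnorm_horizontal_bounded by blast
  define A where "A = max 1 (K + center_bound)"
  have sphere: "Nnorm q \<le> A" if "Ngauge q = 1" for q
  proof -
    obtain w y where q: "q = (w, y)" by fastforce
    have "norm w + sqrt (norm y) = 1"
      using that unfolding q Ngauge_def by simp
    moreover have "0 \<le> norm w" "0 \<le> sqrt (norm y)"
      by simp_all
    ultimately have "norm w \<le> 1" "sqrt (norm y) \<le> 1"
      by linarith+
    then have "Nnorm (0, y) \<le> center_bound"
      using Nnorm_center_le[of y] mult_left_le[OF _ center_bound_nonneg] by fastforce
    with K[OF \<open>norm w \<le> 1\<close>] have "Nnorm (w, 0) + Nnorm (0, y) \<le> K + center_bound"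
      by simp
    then show ?thesis
      using Nnorm_split_le[of w y] unfolding q A_def by simp
  qed
  have "Nnorm p \<le> A * Ngauge p" for p
    by (rule homogeneous_le_from_Ngauge_sphere[where f = Nnorm and g = "\<lambda>p. A * Ngauge p"])
      (simp_all add: Nnorm_Ndil Ngauge_Ndil sphere)
  moreover have "0 < A" by (simp add: A_def)
  ultimately show ?thesis by blast
qed

lemma continuous_Nnorm: "isCont Nnorm p"
proof -
  obtain A where A: "\<And>q. Nnorm q \<le> A * Ngauge q"
    using Nnorm_upper_bound by blast
  define g where "g q = A * (norm (fst q - fst p) + sqrt (norm (snd q - snd p - 2 *\<^sub>R ImPhi \<Phi> (fst p) (fst q))))" for q
  have lin: "bounded_linear (ImPhi \<Phi> (fst p))"
    using ImPhi_bilinear[OF hermitian] unfolding bilinear_conv_bounded_bilinear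
    by (rule bounded_bilinear.bounded_linear_right)
  have "isCont g p"
    unfolding g_def by (intro continuous_intros bounded_linear.continuous[OF lin])
  moreover have "g p = 0"
    by (simp add: g_def)
  ultimately have g: "(g \<longlongrightarrow> 0) (at p)"
    unfolding isCont_def by simp
  have bound: "norm (Nnorm q - Nnorm p) \<le> g q" for q
  proof -
    have "\<bar>Nnorm q - Nnorm p\<bar> \<le> d p q"
      using d_triangle[of 0 p q] d_triangle[of 0 q p] d_commute[of p q]
      unfolding Nnorm_def by linarith
    also have "d p q \<le> g q"
      using A[of "(fst q - fst p, snd q - snd p - 2 *\<^sub>R ImPhi \<Phi> (fst p) (fst q))"]
      by (simp only: d_eq_Nnorm[of p q] g_def Ngauge_def fst_conv snd_conv)
    finally show ?thesis by simp
  qed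
  have "((\<lambda>q. Nnorm q - Nnorm p) \<longlongrightarrow> 0) (at p)"
    by (rule Lim_null_comparison[OF always_eventually g]) (intro allI bound)
  then show ?thesis
    unfolding isCont_def by (rule LIM_zero_cancel)
qed

lemma Nnorm_lower_bound: "\<exists>a>0. \<forall>p. a * Ngauge p \<le> Nnorm p"
proof -
  obtain q0 where q0: "Ngauge q0 = 1" and min: "\<And>q. Ngauge q = 1 \<Longrightarrow> Nnorm q0 \<le> Nnorm q"
    using continuous_attains_inf[OF compact_Ngauge_sphere Ngauge_sphere_nonempty, of Nnorm]
      continuous_Nnorm by (auto simp: continuous_at_imp_continuous_on)
  have "q0 \<noteq> 0"
    using q0 Ngauge_eq_0_iff by (metis zero_neq_one)
  then have "0 < Nnorm q0"
    using Nnorm_nonneg Nnorm_eq_0_iff by (metis order_le_less)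
  moreover have "Nnorm q0 * Ngauge p \<le> Nnorm p" for p
    by (rule homogeneous_le_from_Ngauge_sphere[where f = "\<lambda>p. Nnorm q0 * Ngauge p" and g = Nnorm])
      (simp_all add: Nnorm_Ndil Ngauge_Ndil min)
  ultimately show ?thesis by blast
qed

lemma product_lattice_separated:
  assumes lower: "\<And>p. a * Ngauge p \<le> Nnorm p" and "0 < a" "0 < \<delta>"
    and x: "is_lattice dist J x (\<delta>^2) (R^2)" and \<zeta>: "is_lattice dist J' \<zeta> \<delta> R"
    and "(j, j') \<in> J \<times> J'" "(k, k') \<in> J \<times> J'" "(j, j') \<noteq> (k, k')"
  shows "a * \<delta> \<le> d (\<zeta> j', x j) (\<zeta> k', x k)"
proof -
  have "\<delta> \<le> Ngauge (\<zeta> k' - \<zeta> j', x k - x j - 2 *\<^sub>R ImPhi \<Phi> (\<zeta> j') (\<zeta> k'))"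
  proof (cases "j' = k'")
    case True
    then have "\<delta>^2 \<le> norm (x k - x j)"
      using is_lattice_separated[OF x is_distance_dist, of j k] assms(3,6-8)
      by (simp add: dist_norm norm_minus_commute)
    then have "\<delta> \<le> sqrt (norm (x k - x j))"
      using \<open>0 < \<delta>\<close> real_le_rsqrt by blast
    with True show ?thesis by (simp add: Ngauge_def)
  next
    case False
    then have "\<delta> \<le> norm (\<zeta> k' - \<zeta> j')"
      using is_lattice_separated[OF \<zeta> is_distance_dist, of j' k'] assms(3,6,7)
      by (simp add: dist_norm norm_minus_commute)
    then show ?thesis by (simp add: Ngauge_def add_increasing2)
  qed
  then have "a * \<delta> \<le> a * Ngauge (\<zeta> k' - \<zeta> j', x k - x j - 2 *\<^sub>R ImPhi \<Phi> (\<zeta> j') (\<zeta> k'))"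
    using \<open>0 < a\<close> by simp
  also have "\<dots> \<le> d (\<zeta> j', x j) (\<zeta> k', x k)"
    using lower by (simp add: d_eq_Nnorm)
  finally show ?thesis .
qed

lemma product_lattice_covers:
  assumes upper: "\<And>p. Nnorm p \<le> A * Ngauge p" and "0 < A" "0 < \<delta>" "0 < R"
    and x: "is_lattice dist J x (\<delta>^2) (R^2)" and \<zeta>: "is_lattice dist J' \<zeta> \<delta> R"
  shows "\<exists>P \<in> J \<times> J'. d ((\<lambda>(j, j'). (\<zeta> j', x j)) P) (z, y) < 2 * A * R * \<delta>"
proof -
  obtain j' where "j' \<in> J'" and "dist (\<zeta> j') z < R * \<delta>"
    using is_lattice_covers[OF \<zeta>] .
  then have z: "norm (z - \<zeta> j') < R * \<delta>"
    by (simp add: dist_norm norm_minus_commute)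
  define c where "c = y - 2 *\<^sub>R ImPhi \<Phi> (\<zeta> j') z"
  obtain j where "j \<in> J" and "dist (x j) c < R^2 * \<delta>^2"
    using is_lattice_covers[OF x] .
  then have "norm (c - x j) < (R * \<delta>)^2"
    by (simp add: dist_norm norm_minus_commute power_mult_distrib)
  then have c: "sqrt (norm (c - x j)) < R * \<delta>"
    using assms(3,4) real_sqrt_less_iff[of _ "(R * \<delta>)^2"] by simp
  have "d (\<zeta> j', x j) (z, y) = Nnorm (z - \<zeta> j', c - x j)"
    by (simp add: d_eq_Nnorm c_def algebra_simps)
  also have "\<dots> \<le> A * (norm (z - \<zeta> j') + sqrt (norm (c - x j)))"
    using upper[of "(z - \<zeta> j', c - x j)"] by (simp add: Ngauge_def)
  also have "\<dots> < 2 * A * R * \<delta>"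
    using z c \<open>0 < A\<close> by simp
  finally show ?thesis
    using \<open>j \<in> J\<close> \<open>j' \<in> J'\<close> by (intro bexI[of _ "(j, j')"]) auto
qed

lemma product_is_lattice:
  assumes lower: "\<And>p. a * Ngauge p \<le> Nnorm p" and "0 < a"
    and upper: "\<And>p. Nnorm p \<le> A * Ngauge p" and "0 < A"
    and "0 < \<delta>" "1 < R"
    and x: "is_lattice dist J x (\<delta>^2) (R^2)" and \<zeta>: "is_lattice dist J' \<zeta> \<delta> R"
  shows "is_lattice d (J \<times> J') (\<lambda>(j, j'). (\<zeta> j', x j)) (a / 2 * \<delta>) (4 * A / a * R)"
proof (rule is_latticeI[OF distance])
  show "2 * (a / 2 * \<delta>) \<le> d ((\<lambda>(j, j'). (\<zeta> j', x j)) P) ((\<lambda>(j, j'). (\<zeta> j', x j)) Q)"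
    if "P \<in> J \<times> J'" "Q \<in> J \<times> J'" "P \<noteq> Q" for P Q
    using that product_lattice_separated[OF lower \<open>0 < a\<close> \<open>0 < \<delta>\<close> x \<zeta>]
    by (cases P, cases Q) simp
  have radius: "4 * A / a * R * (a / 2 * \<delta>) = 2 * A * R * \<delta>"
    using \<open>0 < a\<close> by (simp add: field_simps)
  show "\<exists>P\<in>J \<times> J'. d ((\<lambda>(j, j'). (\<zeta> j', x j)) P) q < 4 * A / a * R * (a / 2 * \<delta>)" for q
    unfolding radius using product_lattice_covers[OF upper \<open>0 < A\<close> \<open>0 < \<delta>\<close> _ x \<zeta>, of "fst q" "snd q"]
      \<open>1 < R\<close> by simp
qed

end

theorem lemma6p1:
  fixes \<Phi> :: "complex^'n \<Rightarrow> complex^'n \<Rightarrow> complex^'m"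
    and d :: "((complex^'n) \<times> (real^'m)) \<Rightarrow> ((complex^'n) \<times> (real^'m)) \<Rightarrow> real"
  assumes "hermitian_map \<Phi>"
    and "left_invariant_homogeneous_distance \<Phi> d"
  shows "\<exists>C C'. C > 0 \<and> C' > 0 \<and>
    (\<forall>\<delta> R (J :: 'j set) (x :: 'j \<Rightarrow> real^'m) (J' :: 'k set) (\<zeta> :: 'k \<Rightarrow> complex^'n).
       \<delta> > 0 \<longrightarrow> R > 1 \<longrightarrow>
       is_lattice dist J x (\<delta>^2) (R^2) \<longrightarrow>
       is_lattice dist J' \<zeta> \<delta> R \<longrightarrow>
       is_lattice d (J \<times> J') (\<lambda>(j, j'). (\<zeta> j', x j)) (C * \<delta>) (C' * R))"
proof -
  interpret homogeneous_distance \<Phi> d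
    using assms by unfold_locales
  obtain a where "0 < a" and lower: "\<And>p. a * Ngauge p \<le> Nnorm p"
    using Nnorm_lower_bound by blast
  obtain A where "0 < A" and upper: "\<And>p. Nnorm p \<le> A * Ngauge p"
    using Nnorm_upper_bound by blast
  show ?thesis
    using \<open>0 < a\<close> \<open>0 < A\<close> product_is_lattice[OF lower \<open>0 < a\<close> upper \<open>0 < A\<close>]
    by (intro exI[of _ "a / 2"] exI[of _ "4 * A / a"]) auto
qed

end
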